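(* For $N\in\mathbb N$ let $S_N=1+\frac{N+1}{2N}$, $x_{N,k}=\frac{k}{N^2}$ and $\lambda_{N,k}=\frac{1}{S_N}\left(1+\frac kN\right)\frac1N$ for $k=1,\dots,N$. Let $V_{N,1},\dots,V_{N,N}$ solve the deterministic system $$\frac{d}{dt}V_{N,k}(t)=\sum_{j\neq k}\frac{2(\lambda_{N,k}+\lambda_{N,j})}{V_{N,k}(t)-V_{N,j}(t)},\qquad V_{N,k}(0)=x_{N,k},$$ and let $\alpha_{N,t}=\sum_{k=1}^N\lambda_{N,k}\delta_{V_{N,k}(t)}$. Then there exists $f\in C^2_b(\mathbb R,\mathbb C)$ such that the sequence $\left(\frac{d}{dt}\int_{\mathbb R}f(x)\,d\alpha_{N,t}(x)\Big|_{t=0}\right)_{N\in\mathbb N}$ is unbounded.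
   Context: $C^2_b(\mathbb R,\mathbb C)$ denotes the twice continuously differentiable functions $f:\mathbb R\to\mathbb C$ with $f,f',f''$ bounded. $\delta_x$ is the unit point mass at $x$. *)

theory Defs
  imports "HOL-Analysis.Analysis"
begin

definition C2b :: "(real \<Rightarrow> complex) \<Rightarrow> bool" where
  "C2b f \<longleftrightarrow> (\<exists>f' f''.
      (\<forall>x. (f has_vector_derivative f' x) (at x)) \<and>
      (\<forall>x. (f' has_vector_derivative f'' x) (at x)) \<and>
      continuous_on UNIV f'' \<and>
      bounded (range f) \<and> bounded (range f') \<and> bounded (range f''))"

definition S_N :: "nat \<Rightarrow> real" where
  "S_N N = 1 + (real N + 1) / (2 * real N)"

definition x_N :: "nat \<Rightarrow> nat \<Rightarrow> real" where
  "x_N N k = real k / (real N)^2"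

definition lam_N :: "nat \<Rightarrow> nat \<Rightarrow> real" where
  "lam_N N k = (1 / S_N N) * (1 + real k / real N) * (1 / real N)"

end

theory Submission
  imports Defs
begin

text \<open>Take \<open>f = sin\<close>. Since \<open>V\<^sub>k(0) = x\<^sub>k\<close>, the derivative at \<open>0\<close> is
  \<open>D\<^sub>N = \<Sum>\<^sub>k \<Sum>\<^sub>j\<^sub>\<noteq>\<^sub>k \<lambda>\<^sub>k cos x\<^sub>k \<cdot> 2(\<lambda>\<^sub>k + \<lambda>\<^sub>j)/(x\<^sub>k - x\<^sub>j)\<close>. Pairing the \<open>(k,j)\<close> and \<open>(j,k)\<close>
  terms gives \<open>2(\<lambda>\<^sub>k + \<lambda>\<^sub>j)(\<lambda>\<^sub>k cos x\<^sub>k - \<lambda>\<^sub>j cos x\<^sub>j)/(x\<^sub>k - x\<^sub>j)\<close>. The weights are affine in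
  the positions, \<open>\<lambda>\<^sub>k - \<lambda>\<^sub>j = (x\<^sub>k - x\<^sub>j)/S\<^sub>N\<close>, and cosine is 1-Lipschitz, so the difference
  quotient is at least \<open>cos x\<^sub>k / S\<^sub>N - \<lambda>\<^sub>j \<ge> 1/8\<close> for large \<open>N\<close>. Each of the \<open>N(N-1)/2\<close>
  pairs then contributes at least \<open>1/(4N)\<close>, whence \<open>D\<^sub>N \<ge> (N-1)/8\<close>.\<close>

lemma sum_offdiag_swap:
  fixes F :: "'a \<Rightarrow> 'a \<Rightarrow> 'b::comm_monoid_add"
  assumes "finite A"
  shows "(\<Sum>k\<in>A. \<Sum>j\<in>A - {k}. F k j) = (\<Sum>k\<in>A. \<Sum>j\<in>A - {k}. F j k)"
proof -
  have "(\<Sum>k\<in>A. \<Sum>j\<in>A - {k}. F k j) = (\<Sum>(k, j)\<in>Sigma A (\<lambda>k. A - {k}). F k j)"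
    using assms by (simp add: sum.Sigma)
  also have "\<dots> = (\<Sum>(k, j)\<in>Sigma A (\<lambda>k. A - {k}). F j k)"
    by (rule sum.reindex_bij_witness[of _ prod.swap prod.swap]) auto
  also have "\<dots> = (\<Sum>k\<in>A. \<Sum>j\<in>A - {k}. F j k)"
    using assms by (simp add: sum.Sigma)
  finally show ?thesis .
qed

lemma sum_offdiag_ge:
  fixes F :: "'a \<Rightarrow> 'a \<Rightarrow> real"
  assumes "finite A" and pair: "\<And>k j. k \<in> A \<Longrightarrow> j \<in> A \<Longrightarrow> k \<noteq> j \<Longrightarrow> c \<le> F k j + F j k"
  shows "real (card A) * (real (card A) - 1) * c / 2 \<le> (\<Sum>k\<in>A. \<Sum>j\<in>A - {k}. F k j)"
proof -
  have "real (card A) * (real (card A) - 1) * c = (\<Sum>k\<in>A. \<Sum>j\<in>A - {k}. c)"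
  proof (cases "A = {}")
    case False
    then have "real (card A - 1) = real (card A) - 1"
      using \<open>finite A\<close> by (simp add: of_nat_diff Suc_leI card_gt_0_iff)
    then show ?thesis using \<open>finite A\<close> by simp
  qed simp
  also have "\<dots> \<le> (\<Sum>k\<in>A. \<Sum>j\<in>A - {k}. F k j + F j k)"
    using pair by (intro sum_mono) auto
  also have "\<dots> = 2 * (\<Sum>k\<in>A. \<Sum>j\<in>A - {k}. F k j)"
    using sum_offdiag_swap[OF \<open>finite A\<close>, of F] by (simp add: sum.distrib)
  finally show ?thesis by simp
qed

lemma pair_interaction_eq:
  fixes lk lj gk gj xk xj S :: real
  assumes "xk \<noteq> xj" and "lk - lj = (xk - xj) / S"
  shows "lk * (gk * (2 * (lk + lj) / (xk - xj))) + lj * (gj * (2 * (lj + lk) / (xj - xk)))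
       = 2 * (lk + lj) * (gk / S + lj * ((gk - gj) / (xk - xj)))"
proof -
  define q where "q = 2 * (lk + lj) / (xk - xj)"
  have "2 * (lj + lk) / (xj - xk) = - q"
    unfolding q_def by (metis add.commute divide_minus_right minus_diff_eq)
  then have "lk * (gk * (2 * (lk + lj) / (xk - xj))) + lj * (gj * (2 * (lj + lk) / (xj - xk)))
      = q * (lk * gk - lj * gj)"
    unfolding q_def[symmetric] by (simp add: algebra_simps)
  also have "\<dots> = 2 * (lk + lj) * ((lk * gk - lj * gj) / (xk - xj))"
    unfolding q_def by simp
  finally have "lk * (gk * (2 * (lk + lj) / (xk - xj))) + lj * (gj * (2 * (lj + lk) / (xj - xk)))
      = 2 * (lk + lj) * ((lk * gk - lj * gj) / (xk - xj))" .
  moreover have "lk * gk - lj * gj = (lk - lj) * gk + lj * (gk - gj)" by algebra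
  then have "(lk * gk - lj * gj) / (xk - xj) = gk / S + lj * ((gk - gj) / (xk - xj))"
    using assms by (simp add: add_divide_distrib)
  ultimately show ?thesis by simp
qed

lemma pair_interaction_ge:
  fixes lk lj gk gj xk xj S :: real
  assumes "xk \<noteq> xj" and "lk - lj = (xk - xj) / S" and "\<bar>gk - gj\<bar> \<le> \<bar>xk - xj\<bar>"
    and "0 \<le> lj" and "0 \<le> lk + lj"
  shows "2 * (lk + lj) * (gk / S - lj)
       \<le> lk * (gk * (2 * (lk + lj) / (xk - xj))) + lj * (gj * (2 * (lj + lk) / (xj - xk)))"
proof -
  have "\<bar>(gk - gj) / (xk - xj)\<bar> \<le> 1"
    using assms(1,3) by (simp add: abs_divide divide_le_eq_1)
  then have "- 1 \<le> (gk - gj) / (xk - xj)"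
    by linarith
  then have "lj * (- 1) \<le> lj * ((gk - gj) / (xk - xj))"
    using assms(4) by (intro mult_left_mono) auto
  then have "2 * (lk + lj) * (gk / S - lj) \<le> 2 * (lk + lj) * (gk / S + lj * ((gk - gj) / (xk - xj)))"
    using assms(5) by (intro mult_left_mono) auto
  then show ?thesis
    unfolding pair_interaction_eq[OF assms(1,2)] .
qed

lemma abs_cos_diff_le: "\<bar>cos (a::real) - cos b\<bar> \<le> \<bar>a - b\<bar>"
proof -
  have "\<bar>cos a - cos b\<bar> = 2 * \<bar>sin ((a + b) / 2)\<bar> * \<bar>sin ((b - a) / 2)\<bar>"
    by (simp add: cos_diff_cos abs_mult)
  also have "\<dots> \<le> 2 * 1 * \<bar>(b - a) / 2\<bar>"
    by (intro mult_mono abs_sin_x_le_abs_x) auto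
  finally show ?thesis by simp
qed

lemma cos_ge_half:
  assumes "0 \<le> (x::real)" and "x \<le> 1"
  shows "1/2 \<le> cos x"
proof -
  have "cos (pi/3) \<le> cos x" using assms pi_gt3 by (intro cos_monotone_0_pi_le) auto
  then show ?thesis by (simp add: cos_60)
qed

lemma S_N_bounds:
  assumes "N \<ge> 1"
  shows "1 \<le> S_N N" and "S_N N \<le> 2"
  using assms unfolding S_N_def by (simp_all add: divide_le_eq_1)

lemma lam_N_bounds:
  assumes "N \<ge> 1" and "k \<le> N"
  shows "1 / (2 * real N) \<le> lam_N N k" and "lam_N N k \<le> 2 / real N"
proof -
  have S: "1/2 \<le> 1 / S_N N" "1 / S_N N \<le> 1" "0 \<le> 1 / S_N N"
    using S_N_bounds[OF assms(1)] by (simp_all add: le_divide_eq)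
  have q: "0 \<le> real k / real N" "real k / real N \<le> 1"
    using assms by (simp_all add: divide_le_eq_1)
  have "1/2 * 1 \<le> (1 / S_N N) * (1 + real k / real N)"
    using S q by (intro mult_mono) auto
  then have "1/2 * (1 / real N) \<le> (1 / S_N N) * (1 + real k / real N) * (1 / real N)"
    by (intro mult_right_mono) auto
  then show "1 / (2 * real N) \<le> lam_N N k"
    unfolding lam_N_def by simp
  have "(1 / S_N N) * (1 + real k / real N) \<le> 1 * 2"
    using S q by (intro mult_mono) auto
  then have "(1 / S_N N) * (1 + real k / real N) * (1 / real N) \<le> 2 * (1 / real N)"
    by (intro mult_right_mono) auto
  then show "lam_N N k \<le> 2 / real N"
    unfolding lam_N_def by simp
qed

lemma lam_N_diff:
  assumes "N \<ge> 1"
  shows "lam_N N k - lam_N N j = (x_N N k - x_N N j) / S_N N"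
  using assms S_N_bounds[OF assms]
  unfolding lam_N_def x_N_def by (simp add: field_simps power2_eq_square)

lemma x_N_bounds:
  assumes "N \<ge> 1" and "k \<le> N"
  shows "0 \<le> x_N N k" and "x_N N k \<le> 1"
proof -
  have "real k \<le> real N * real N"
    using assms by (metis le_trans mult_le_mono2 mult_1_right of_nat_le_iff of_nat_mult)
  then show "x_N N k \<le> 1"
    unfolding x_N_def using assms by (simp add: power2_eq_square divide_le_eq_1)
qed (simp add: x_N_def)

lemma pair_interaction_x_N_ge:
  assumes N: "N \<ge> 16" and k: "k \<in> {1..N}" and j: "j \<in> {1..N}" and "k \<noteq> j"
  shows "1 / (4 * real N)
       \<le> lam_N N k * (cos (x_N N k) * (2 * (lam_N N k + lam_N N j) / (x_N N k - x_N N j)))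
        + lam_N N j * (cos (x_N N j) * (2 * (lam_N N j + lam_N N k) / (x_N N j - x_N N k)))"
proof -
  have N1: "N \<ge> 1" using N by simp
  have lj: "lam_N N j \<le> 1/8"
  proof -
    have "lam_N N j \<le> 2 / real N" using lam_N_bounds(2)[OF N1] j by simp
    also have "\<dots> \<le> 1/8" using N by (simp add: divide_le_eq)
    finally show ?thesis .
  qed
  have lk: "1 / (2 * real N) \<le> lam_N N k" and lj': "1 / (2 * real N) \<le> lam_N N j"
    using lam_N_bounds(1)[OF N1] k j by auto
  have lsum: "1 / real N \<le> lam_N N k + lam_N N j"
    using lk lj' by simp
  have lk0: "0 \<le> lam_N N k" and lj0: "0 \<le> lam_N N j"
    using lk lj' by (auto intro: order_trans[rotated])
  have cos_k: "1/2 \<le> cos (x_N N k)"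
    using cos_ge_half x_N_bounds[OF N1] k by simp
  have "cos (x_N N k) / 2 \<le> cos (x_N N k) / S_N N"
    using S_N_bounds[OF N1] cos_k by (intro divide_left_mono) auto
  then have "1/8 \<le> cos (x_N N k) / S_N N - lam_N N j"
    using cos_k lj by linarith
  then have "2 * (1 / real N) * (1/8) \<le> 2 * (lam_N N k + lam_N N j) * (cos (x_N N k) / S_N N - lam_N N j)"
    using lsum lk0 lj0 by (intro mult_mono) auto
  also have "\<dots> \<le> lam_N N k * (cos (x_N N k) * (2 * (lam_N N k + lam_N N j) / (x_N N k - x_N N j)))
        + lam_N N j * (cos (x_N N j) * (2 * (lam_N N j + lam_N N k) / (x_N N j - x_N N k)))"
  proof (rule pair_interaction_ge[OF _ lam_N_diff[OF N1] abs_cos_diff_le lj0])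
    show "x_N N k \<noteq> x_N N j" using \<open>k \<noteq> j\<close> N1 by (simp add: x_N_def divide_cancel_right)
    show "0 \<le> lam_N N k + lam_N N j" using lk0 lj0 by simp
  qed
  finally show ?thesis by simp
qed

definition drift_N :: "nat \<Rightarrow> nat \<Rightarrow> real" where
  "drift_N N k = (\<Sum>j\<in>{1..N} - {k}. 2 * (lam_N N k + lam_N N j) / (x_N N k - x_N N j))"

lemma sum_cos_drift_N_ge:
  assumes "N \<ge> 16"
  shows "(real N - 1) / 8 \<le> (\<Sum>k=1..N. lam_N N k * (cos (x_N N k) * drift_N N k))"
proof -
  have "real N * (real N - 1) * (1 / (4 * real N)) / 2
      \<le> (\<Sum>k\<in>{1..N}. \<Sum>j\<in>{1..N} - {k}.
           lam_N N k * (cos (x_N N k) * (2 * (lam_N N k + lam_N N j) / (x_N N k - x_N N j))))"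
    using sum_offdiag_ge[of "{1..N}" "1 / (4 * real N)"] pair_interaction_x_N_ge[OF assms] by simp
  moreover have "real N * (real N - 1) * (1 / (4 * real N)) / 2 = (real N - 1) / 8"
    using assms by simp
  ultimately show ?thesis
    unfolding drift_N_def by (simp add: sum_distrib_left)
qed

lemma weighted_sum_comp_has_real_derivative:
  assumes "\<And>x. (g has_real_derivative g' x) (at x)"
    and "\<And>k. k \<in> A \<Longrightarrow> (V k has_real_derivative v k) (at t within S)"
  shows "((\<lambda>s. \<Sum>k\<in>A. c k * g (V k s)) has_real_derivative (\<Sum>k\<in>A. c k * (g' (V k t) * v k)))
           (at t within S)"
  using assms by (intro DERIV_sum DERIV_cmult DERIV_chain2[OF assms(1)])

lemma not_bounded_of_real_if_linear_lower_bound: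
  fixes R :: "nat \<Rightarrow> real"
  assumes "0 < c" and lower: "\<And>N. N \<ge> K \<Longrightarrow> c * real N - d \<le> R N"
  shows "\<not> bounded ((\<lambda>N. of_real (R N) :: 'a::real_normed_algebra_1) ` {M..})"
proof
  assume "bounded ((\<lambda>N. of_real (R N) :: 'a) ` {M..})"
  then obtain B where B: "\<And>N. N \<ge> M \<Longrightarrow> \<bar>R N\<bar> \<le> B"
    unfolding bounded_iff by auto
  obtain n :: nat where n: "(B + d) / c < real n"
    using reals_Archimedean2 by blast
  define N where "N = max (max M K) n"
  have "(B + d) / c < real N"
    using n unfolding N_def by (simp add: less_max_iff_disj)
  then have "B + d < c * real N"
    using \<open>0 < c\<close> by (simp add: pos_divide_less_eq mult.commute)
  then show False
    using lower[of N] B[of N] unfolding N_def by force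
qed

lemma sum_sin_has_derivative_at_start:
  assumes init: "\<And>k. k \<in> {1..N} \<Longrightarrow> V k 0 = x_N N k"
    and ode: "\<And>k. k \<in> {1..N} \<Longrightarrow> (V k has_real_derivative
          (\<Sum>j\<in>{1..N} - {k}. 2 * (lam_N N k + lam_N N j) / (V k 0 - V j 0))) (at 0 within S)"
  shows "((\<lambda>t. \<Sum>k=1..N. complex_of_real (lam_N N k) * complex_of_real (sin (V k t)))
           has_vector_derivative complex_of_real (\<Sum>k=1..N. lam_N N k * (cos (x_N N k) * drift_N N k)))
         (at 0 within S)"
proof -
  have "(V k has_real_derivative drift_N N k) (at 0 within S)" if k: "k \<in> {1..N}" for k
  proof -
    have "(\<Sum>j\<in>{1..N} - {k}. 2 * (lam_N N k + lam_N N j) / (V k 0 - V j 0)) = drift_N N k"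
      unfolding drift_N_def using init k by (intro sum.cong) auto
    then show ?thesis using ode[OF k] by simp
  qed
  then have "((\<lambda>t. \<Sum>k=1..N. lam_N N k * sin (V k t)) has_real_derivative
      (\<Sum>k=1..N. lam_N N k * (cos (V k 0) * drift_N N k))) (at 0 within S)"
    by (rule weighted_sum_comp_has_real_derivative[OF DERIV_sin])
  moreover have "(\<Sum>k=1..N. lam_N N k * (cos (V k 0) * drift_N N k))
      = (\<Sum>k=1..N. lam_N N k * (cos (x_N N k) * drift_N N k))"
    using init by (intro sum.cong) auto
  ultimately have "((\<lambda>t. \<Sum>k=1..N. lam_N N k * sin (V k t)) has_real_derivative
      (\<Sum>k=1..N. lam_N N k * (cos (x_N N k) * drift_N N k))) (at 0 within S)"
    by simp
  then have "((\<lambda>t. complex_of_real (\<Sum>k=1..N. lam_N N k * sin (V k t))) has_vector_derivative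
      complex_of_real (\<Sum>k=1..N. lam_N N k * (cos (x_N N k) * drift_N N k))) (at 0 within S)"
    by (rule has_vector_derivative_of_real)
  then show ?thesis by (simp only: of_real_sum of_real_mult)
qed

lemma not_bounded_sum_cos_drift_N:
  "\<not> bounded ((\<lambda>N. complex_of_real (\<Sum>k=1..N. lam_N N k * (cos (x_N N k) * drift_N N k))) ` {1..})"
proof (rule not_bounded_of_real_if_linear_lower_bound)
  show "1/8 * real N - 1/8 \<le> (\<Sum>k=1..N. lam_N N k * (cos (x_N N k) * drift_N N k))"
    if "16 \<le> N" for N
  proof -
    have "1/8 * real N - 1/8 = (real N - 1) / 8" by simp
    also have "\<dots> \<le> (\<Sum>k=1..N. lam_N N k * (cos (x_N N k) * drift_N N k))"
      by (rule sum_cos_drift_N_ge[OF that])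
    finally show ?thesis .
  qed
qed simp

lemma sin_C2b: "C2b (\<lambda>x. complex_of_real (sin x))"
  unfolding C2b_def
proof (intro exI conjI allI)
  show "((\<lambda>x. complex_of_real (sin x)) has_vector_derivative complex_of_real (cos x)) (at x)" for x
    by (intro has_vector_derivative_of_real DERIV_sin)
  show "((\<lambda>x. complex_of_real (cos x)) has_vector_derivative complex_of_real (- sin x)) (at x)" for x
    by (intro has_vector_derivative_of_real DERIV_cos)
  show "continuous_on UNIV (\<lambda>x. complex_of_real (- sin x))"
    by (intro continuous_intros)
qed (auto simp: bounded_iff intro!: exI[of _ 1])

theorem mainTheorem3:
  fixes V :: "nat \<Rightarrow> nat \<Rightarrow> real \<Rightarrow> real" and T :: "nat \<Rightarrow> real"
  assumes T_pos: "\<And>N. N \<ge> 1 \<Longrightarrow> T N > 0"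
    and init: "\<And>N k. N \<ge> 1 \<Longrightarrow> k \<in> {1..N} \<Longrightarrow> V N k 0 = x_N N k"
    and ode: "\<And>N k t. N \<ge> 1 \<Longrightarrow> k \<in> {1..N} \<Longrightarrow> t \<in> {0..<T N} \<Longrightarrow>
       (V N k has_real_derivative
          (\<Sum>j\<in>{1..N} - {k}. 2 * (lam_N N k + lam_N N j) / (V N k t - V N j t)))
         (at t within {0..<T N})"
  shows "\<exists>f. C2b f \<and> (\<exists>D :: nat \<Rightarrow> complex.
           (\<forall>N\<ge>1. ((\<lambda>t. \<Sum>k=1..N. complex_of_real (lam_N N k) * f (V N k t))
                      has_vector_derivative D N) (at 0 within {0..<T N})) \<and>
           \<not> bounded (D ` {1..}))"
proof -
  have "((\<lambda>t. \<Sum>k=1..N. complex_of_real (lam_N N k) * complex_of_real (sin (V N k t)))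
           has_vector_derivative complex_of_real (\<Sum>k=1..N. lam_N N k * (cos (x_N N k) * drift_N N k)))
         (at 0 within {0..<T N})" if N: "N \<ge> 1" for N
    using init[OF N] ode[OF N, of _ 0] T_pos[OF N] by (intro sum_sin_has_derivative_at_start) auto
  then show ?thesis
    using sin_C2b not_bounded_sum_cos_drift_N
    by (intro exI[of _ "\<lambda>x. complex_of_real (sin x)"] conjI
        exI[of _ "\<lambda>N. complex_of_real (\<Sum>k=1..N. lam_N N k * (cos (x_N N k) * drift_N N k))"]) auto
qed

end
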